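(* As formal power series, coefficientwise modulo $4$, \[ \sum_{n=0}^\infty pl_4(n)q^n\equiv (1+q+2q^2+q^3+3q^5+2q^6+3q^7+3q^8)\sum_{n=0}^\infty pl_2(n)q^{2n}\pmod 4. \]
   Context: For a positive integer $k$, $pl_k(n)$ denotes the number of $k$-component plane partitions of $n$ (plane partitions of $n$ all of whose entries are $\le k$), with $pl_k(0)=1$ and $pl_k(n)=0$ for $n<0$; equivalently $\sum_{n\ge0}pl_k(n)q^n=\prod_{n=1}^{\infty}(1-q^n)^{-\min(k,n)}$. *)

theory Defs
  imports "HOL-Computational_Algebra.Formal_Power_Series"
begin

text \<open>Geometric series 1/(1 - q^m) = sum_j q^(m j), for m \<ge> 1.\<close>
definition geom_fps :: "nat \<Rightarrow> int fps" where
  "geom_fps m = Abs_fps (\<lambda>j. if m dvd j then 1 else 0)"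

text \<open>pl_k(n) = [q^n] prod_{m\<ge>1} (1-q^m)^(-min k m).  Factors with m > n do not
  contribute to the coefficient of q^n, so the product may be truncated at m = n.\<close>
definition pl :: "nat \<Rightarrow> nat \<Rightarrow> int" where
  "pl k n = fps_nth (\<Prod>m\<in>{1..n}. geom_fps m ^ min k m) n"

definition pl_gf :: "nat \<Rightarrow> int fps" where
  "pl_gf k = Abs_fps (pl k)"

definition pl_gf_sq :: "nat \<Rightarrow> int fps" where
  "pl_gf_sq k = Abs_fps (\<lambda>n. if even n then pl k (n div 2) else 0)"

end

theory Submission
  imports Defs
begin

text \<open>
  Since (1 - y)^4 = (1 - y^2)^2 mod 4, inverting gives (1 - q^m)^-4 = (1 - q^(2m))^-2 mod 4
  for every m. Hence the product for pl_4 agrees modulo 4 with the product of the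
  (1 - q^(2m))^-2, which is (1 - q^2)^-1 times the sum of pl_2(n) q^(2n), up to corrections
  for the exponents min 4 m < 4 at m = 1, 2, 3. These corrections combine to
  (1 - q)^3 (1 - q^2) (1 - q^3), which is congruent to the stated polynomial modulo 4.
  The infinite products are handled through truncations: the coefficient of q^n only
  depends on the factors with m \<le> n, i.e. truncations agree modulo q^(n+1).
\<close>

definition ring_cong :: "'a::comm_ring_1 \<Rightarrow> 'a \<Rightarrow> 'a \<Rightarrow> bool" where
  "ring_cong d a b \<longleftrightarrow> d dvd a - b"

lemma ring_cong_refl [simp]: "ring_cong d a a"
  by (simp add: ring_cong_def)

lemma ring_cong_sym: "ring_cong d a b \<Longrightarrow> ring_cong d b a"
  unfolding ring_cong_def using dvd_minus_iff[of d "a - b"] by simp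

lemma ring_cong_trans [trans]: "ring_cong d a b \<Longrightarrow> ring_cong d b c \<Longrightarrow> ring_cong d a c"
  unfolding ring_cong_def using dvd_add[of d "a - b" "b - c"] by simp

lemma ring_cong_mult: "ring_cong d a b \<Longrightarrow> ring_cong d a' b' \<Longrightarrow> ring_cong d (a * a') (b * b')"
proof -
  assume "ring_cong d a b" "ring_cong d a' b'"
  moreover have "a * a' - b * b' = a * (a' - b') + (a - b) * b'"
    by (simp add: algebra_simps)
  ultimately show ?thesis
    unfolding ring_cong_def by (metis dvd_add dvd_mult dvd_mult2)
qed

lemma ring_cong_power: "ring_cong d a b \<Longrightarrow> ring_cong d (a ^ k) (b ^ k)"
  by (induction k) (auto intro: ring_cong_mult)

lemma ring_cong_prod:
  "(\<And>m. m \<in> S \<Longrightarrow> ring_cong d (f m) (g m)) \<Longrightarrow> ring_cong d (prod f S) (prod g S)"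
  by (induction S rule: infinite_finite_induct) (auto intro: ring_cong_mult)

lemma ring_cong_fps_compose:
  assumes "fps_nth c 0 = 0" "ring_cong m f (h :: 'a::idom fps)"
  shows "ring_cong (m oo c) (f oo c) (h oo c)"
proof -
  from assms(2) obtain r where "f - h = m * r"
    unfolding ring_cong_def by (elim dvdE)
  then have "(f oo c) - (h oo c) = (m oo c) * (r oo c)"
    by (metis assms(1) fps_compose_mult_distrib fps_compose_sub_distrib)
  then show ?thesis
    unfolding ring_cong_def by simp
qed

lemma ring_cong_dvd_modulus: "d' dvd d \<Longrightarrow> ring_cong d a b \<Longrightarrow> ring_cong d' a b"
  unfolding ring_cong_def using dvd_trans by blast

lemma ring_cong_inverse:
  assumes "a * u = 1" "b * v = 1" "ring_cong d a b"
  shows "ring_cong d u v"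
proof -
  have "u - v = u * v * (b - a)"
    using assms(1,2) by (simp add: algebra_simps) (metis mult.assoc mult.commute mult_1_right)
  then show ?thesis
    using assms(3) unfolding ring_cong_def by (metis dvd_minus_iff dvd_mult minus_diff_eq)
qed

lemma one_minus_power4_cong: "ring_cong 4 ((1 - y) ^ 4) ((1 - y ^ 2) ^ 2 :: 'a::comm_ring_1)"
proof -
  have "(1 - y) ^ 4 - (1 - y ^ 2) ^ 2 = 4 * (2 * y ^ 2 - y - y ^ 3)"
    by (simp add: eval_nat_numeral algebra_simps)
  then show ?thesis unfolding ring_cong_def by (simp only: dvd_triv_left)
qed

lemma power_eq_unit_power:
  assumes "a * u = (1::'a::comm_monoid_mult)" "e \<le> k"
  shows "u ^ e = a ^ (k - e) * u ^ k"
proof -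
  have "u ^ e = u ^ e * (a * u) ^ (k - e)"
    by (simp add: assms(1))
  also have "\<dots> = a ^ (k - e) * u ^ (e + (k - e))"
    by (simp add: power_mult_distrib power_add mult_ac)
  finally show ?thesis
    using assms(2) by simp
qed

lemma fps_X_power_dvd_iff: "fps_X ^ k dvd (f :: 'a::comm_ring_1 fps) \<longleftrightarrow> (\<forall>j<k. fps_nth f j = 0)"
proof
  assume "fps_X ^ k dvd f"
  then show "\<forall>j<k. fps_nth f j = 0" by (auto simp: fps_X_power_mult_nth)
next
  assume "\<forall>j<k. fps_nth f j = 0"
  then have "f = fps_X ^ k * fps_shift k f"
    by (intro fps_ext) (simp add: fps_X_power_mult_nth)
  then show "fps_X ^ k dvd f" by (metis dvd_triv_left)
qed

lemma ring_cong_fps_X_power_nth: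
  "ring_cong (fps_X ^ k) f (h :: 'a::comm_ring_1 fps) \<Longrightarrow> j < k \<Longrightarrow> fps_nth f j = fps_nth h j"
  unfolding ring_cong_def fps_X_power_dvd_iff by simp

lemma ring_cong_fps_const_nth:
  "ring_cong (fps_const d) f (h :: int fps) \<Longrightarrow> fps_nth f n mod d = fps_nth h n mod d"
  unfolding ring_cong_def mod_eq_dvd_iff
  by (elim dvdE) (metis dvdI fps_sub_nth fps_mult_left_const_nth)

lemma fps_compose_X_power_nth:
  assumes "k \<ge> 1"
  shows "fps_nth (f oo fps_X ^ k) n = (if k dvd n then fps_nth f (n div k) else (0::'a::comm_ring_1))"
proof -
  have "fps_nth (f oo fps_X ^ k) n = (\<Sum>i=0..n. fps_nth f i * (if n = k * i then 1 else 0))"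
    by (simp add: fps_compose_nth flip: power_mult)
  also have "\<dots> = (\<Sum>i=0..n. if i = n div k \<and> k dvd n then fps_nth f i else 0)"
    using assms by (intro sum.cong) auto
  also have "\<dots> = (if k dvd n then fps_nth f (n div k) else 0)"
    by (cases "k dvd n") (simp_all add: sum.delta')
  finally show ?thesis .
qed

lemma geom_fps_eq:
  assumes "m \<ge> 1"
  shows "geom_fps m = 1 + fps_X ^ m * geom_fps m"
proof (rule fps_ext)
  fix n
  show "fps_nth (geom_fps m) n = fps_nth (1 + fps_X ^ m * geom_fps m) n"
    using assms by (cases "n < m") (auto simp: geom_fps_def fps_X_power_mult_nth dvd_minus_self)
qed

lemma geom_fps_inverse:
  assumes "m \<ge> 1"
  shows "(1 - fps_X ^ m) * geom_fps m = 1"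
proof -
  have "(1 - fps_X ^ m) * geom_fps m = geom_fps m - fps_X ^ m * geom_fps m"
    by (simp add: algebra_simps)
  then show ?thesis
    using geom_fps_eq[OF assms] by (metis add_diff_cancel_right')
qed

lemma geom_fps_cong_one: "m \<ge> 1 \<Longrightarrow> ring_cong (fps_X ^ m) (geom_fps m) 1"
  unfolding ring_cong_def by (subst geom_fps_eq) simp_all

lemma geom_fps_compose_X_power: "k \<ge> 1 \<Longrightarrow> geom_fps m oo fps_X ^ k = geom_fps (k * m)"
  by (intro fps_ext) (auto simp: fps_compose_X_power_nth geom_fps_def dvd_div_iff_mult
      elim!: dvdE intro: dvd_mult_right)

lemma geom_fps_power4_cong:
  assumes "m \<ge> 1"
  shows "ring_cong 4 (geom_fps m ^ 4) (geom_fps (2 * m) ^ 2)"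
proof (rule ring_cong_inverse)
  show "(1 - fps_X ^ m) ^ 4 * geom_fps m ^ 4 = 1"
    using geom_fps_inverse[OF assms] by (simp flip: power_mult_distrib)
  show "(1 - (fps_X ^ m) ^ 2) ^ 2 * geom_fps (2 * m) ^ 2 = 1"
    using geom_fps_inverse[of "2 * m"] assms
    by (simp add: mult.commute flip: power_mult_distrib power_mult)
qed (rule one_minus_power4_cong)

definition geom_prod :: "(nat \<Rightarrow> nat) \<Rightarrow> nat \<Rightarrow> int fps" where
  "geom_prod e N = (\<Prod>m\<in>{1..N}. geom_fps m ^ e m)"

lemma geom_prod_cong:
  assumes "n \<le> N"
  shows "ring_cong (fps_X ^ Suc n) (geom_prod e N) (geom_prod e n)"
proof -
  have tail: "ring_cong (fps_X ^ Suc n)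
      (\<Prod>m\<in>{Suc n..N}. geom_fps m ^ e m) (\<Prod>m\<in>{Suc n..N}. 1 ^ e m)"
  proof (intro ring_cong_prod ring_cong_power)
    fix m assume "m \<in> {Suc n..N}"
    then show "ring_cong (fps_X ^ Suc n) (geom_fps m) 1"
      by (intro ring_cong_dvd_modulus[OF le_imp_power_dvd geom_fps_cong_one]) auto
  qed
  have "geom_prod e N = geom_prod e n * (\<Prod>m\<in>{Suc n..N}. geom_fps m ^ e m)"
    unfolding geom_prod_def using assms
    by (subst prod.union_disjoint[symmetric]) (auto intro!: prod.cong)
  then show ?thesis
    using ring_cong_mult[OF ring_cong_refl tail] by simp
qed

lemma geom_prod_compose_X_power:
  "k \<ge> 1 \<Longrightarrow> geom_prod e N oo fps_X ^ k = (\<Prod>m\<in>{1..N}. geom_fps (k * m) ^ e m)"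
  unfolding geom_prod_def
  by (simp add: fps_compose_prod_distrib geom_fps_compose_X_power flip: fps_compose_power)

lemma geom_prod_power4_cong:
  assumes "\<And>m. e m \<le> 4"
  shows "ring_cong 4 (geom_prod e N)
           (\<Prod>m\<in>{1..N}. (1 - fps_X ^ m) ^ (4 - e m) * geom_fps (2 * m) ^ 2)"
  unfolding geom_prod_def
proof (rule ring_cong_prod)
  fix m assume "m \<in> {1..N}"
  then have m: "m \<ge> 1" by simp
  have "geom_fps m ^ e m = (1 - fps_X ^ m) ^ (4 - e m) * geom_fps m ^ 4"
    using power_eq_unit_power[OF geom_fps_inverse[OF m] assms] .
  then show "ring_cong 4 (geom_fps m ^ e m) ((1 - fps_X ^ m) ^ (4 - e m) * geom_fps (2 * m) ^ 2)"
    using ring_cong_mult[OF ring_cong_refl geom_fps_power4_cong[OF m]] by simp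
qed

lemma pl_eq_geom_prod: "pl k n = fps_nth (geom_prod (min k) n) n"
  unfolding pl_def geom_prod_def ..

lemma pl_gf_cong_geom_prod:
  assumes "n \<le> N"
  shows "ring_cong (fps_X ^ Suc n) (pl_gf k) (geom_prod (min k) N)"
proof -
  have "fps_nth (pl_gf k) j = fps_nth (geom_prod (min k) N) j" if "j < Suc n" for j
  proof -
    have "ring_cong (fps_X ^ Suc j) (geom_prod (min k) N) (geom_prod (min k) j)"
      using that assms by (intro geom_prod_cong) simp
    then have "fps_nth (geom_prod (min k) N) j = fps_nth (geom_prod (min k) j) j"
      by (rule ring_cong_fps_X_power_nth) simp
    then show ?thesis
      by (simp add: pl_gf_def pl_eq_geom_prod)
  qed
  then show ?thesis
    unfolding ring_cong_def fps_X_power_dvd_iff by simp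
qed

lemma pl_gf_sq_eq: "pl_gf_sq k = pl_gf k oo fps_X ^ 2"
  by (intro fps_ext) (simp add: pl_gf_sq_def pl_gf_def fps_compose_X_power_nth)

lemma pl_gf_sq_cong_geom_prod:
  assumes "n \<le> N"
  shows "ring_cong (fps_X ^ Suc n) (pl_gf_sq k) (geom_prod (min k) N oo fps_X ^ 2)"
proof -
  have "ring_cong (fps_X ^ Suc n oo fps_X ^ 2)
      (pl_gf k oo fps_X ^ 2) (geom_prod (min k) N oo fps_X ^ 2)"
    using pl_gf_cong_geom_prod[OF assms] by (intro ring_cong_fps_compose) simp_all
  moreover have "fps_X ^ Suc n oo fps_X ^ 2 = (fps_X ^ 2 :: int fps) ^ Suc n"
    using fps_compose_power[of "fps_X ^ 2 :: int fps" fps_X "Suc n"] by simp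
  moreover have "fps_X ^ Suc n dvd (fps_X ^ 2 :: int fps) ^ Suc n"
    by (metis le_imp_power_dvd power_mult mult_le_mono1 one_le_numeral mult_1)
  ultimately show ?thesis
    unfolding pl_gf_sq_eq by (metis ring_cong_dvd_modulus)
qed

lemma correction_polynomial_cong:
  "ring_cong 4 (1 + y + 2 * y ^ 2 + y ^ 3 + 3 * y ^ 5 + 2 * y ^ 6 + 3 * y ^ 7 + 3 * y ^ 8)
     ((1 - y) ^ 3 * (1 - y ^ 2) * (1 - y ^ 3) :: 'a::comm_ring_1)"
proof -
  have "(1 + y + 2 * y ^ 2 + y ^ 3 + 3 * y ^ 5 + 2 * y ^ 6 + 3 * y ^ 7 + 3 * y ^ 8)
      - (1 - y) ^ 3 * (1 - y ^ 2) * (1 - y ^ 3) = 4 * (y + y ^ 5 + y ^ 6 + y ^ 8 :: 'a)"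
    by (simp add: eval_nat_numeral algebra_simps)
  then show ?thesis
    unfolding ring_cong_def by (simp only: dvd_triv_left)
qed

lemma geom_prod_min4_cong:
  assumes "N \<ge> 3"
  shows "ring_cong 4 (geom_prod (min 4) N)
     ((1 + fps_X + 2 * fps_X ^ 2 + fps_X ^ 3 + 3 * fps_X ^ 5 + 2 * fps_X ^ 6
       + 3 * fps_X ^ 7 + 3 * fps_X ^ 8) * (geom_prod (min 2) N oo fps_X ^ 2))"
    (is "ring_cong 4 _ (?P * _)")
proof -
  define B where "B = (\<Prod>m\<in>{1..N}. geom_fps (2 * m) ^ min 2 m)"
  have correction: "(\<Prod>m\<in>{1..N}. (1 - fps_X ^ m) ^ (4 - min 4 m))
      = (1 - fps_X) ^ 3 * (1 - fps_X ^ 2) ^ 2 * (1 - fps_X ^ 3 :: int fps)"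
  proof -
    have "(\<Prod>m\<in>{1..N}. (1 - fps_X ^ m) ^ (4 - min 4 m))
        = (\<Prod>m\<in>{1..3}. (1 - fps_X ^ m) ^ (4 - min 4 m) :: int fps)"
      using assms by (intro prod.mono_neutral_right) auto
    then show ?thesis
      by (simp add: numeral_eq_Suc atLeastAtMostSuc_conv mult_ac)
  qed
  have squares: "(\<Prod>m\<in>{1..N}. geom_fps (2 * m) ^ 2) = geom_fps 2 * B"
  proof -
    have "(\<Prod>m\<in>{1..N}. geom_fps (2 * m) ^ 2)
        = B * (\<Prod>m\<in>{1..N}. geom_fps (2 * m) ^ (2 - min 2 m))"
      unfolding B_def prod.distrib[symmetric] by (intro prod.cong) (simp_all flip: power_add)
    also have "(\<Prod>m\<in>{1..N}. geom_fps (2 * m) ^ (2 - min 2 m))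
        = (\<Prod>m\<in>{1}. geom_fps (2 * m) ^ (2 - min 2 m))"
      using assms by (intro prod.mono_neutral_right) auto
    finally show ?thesis by simp
  qed
  have "ring_cong 4 (geom_prod (min 4) N)
      ((\<Prod>m\<in>{1..N}. (1 - fps_X ^ m) ^ (4 - min 4 m)) * (\<Prod>m\<in>{1..N}. geom_fps (2 * m) ^ 2))"
    using geom_prod_power4_cong[of "min 4" N] by (simp add: prod.distrib)
  also have "\<dots> = (1 - fps_X) ^ 3 * (1 - fps_X ^ 2) * (1 - fps_X ^ 3)
      * ((1 - fps_X ^ 2) * geom_fps 2) * B"
    unfolding correction squares by (simp add: power2_eq_square mult_ac)
  also have "\<dots> = (1 - fps_X) ^ 3 * (1 - fps_X ^ 2) * (1 - fps_X ^ 3) * B"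
    using geom_fps_inverse[of 2] by simp
  also have "ring_cong 4 \<dots> (?P * B)"
    using ring_cong_mult[OF ring_cong_sym[OF correction_polynomial_cong] ring_cong_refl] .
  finally show ?thesis
    by (simp add: B_def geom_prod_compose_X_power)
qed

theorem mainTheorem6:
  shows "\<forall>n. fps_nth (pl_gf 4) n mod 4 =
     fps_nth ((1 + fps_X + 2 * fps_X ^ 2 + fps_X ^ 3 + 3 * fps_X ^ 5 + 2 * fps_X ^ 6
               + 3 * fps_X ^ 7 + 3 * fps_X ^ 8) * pl_gf_sq 2) n mod 4"
proof
  fix n :: nat
  define P :: "int fps" where "P = 1 + fps_X + 2 * fps_X ^ 2 + fps_X ^ 3 + 3 * fps_X ^ 5
    + 2 * fps_X ^ 6 + 3 * fps_X ^ 7 + 3 * fps_X ^ 8"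
  define N where "N = n + 3"
  have "fps_nth (pl_gf 4) n = fps_nth (geom_prod (min 4) N) n"
    by (rule ring_cong_fps_X_power_nth[OF pl_gf_cong_geom_prod[of n]]) (simp_all add: N_def)
  also have "\<dots> mod 4 = fps_nth (P * (geom_prod (min 2) N oo fps_X ^ 2)) n mod 4"
    using geom_prod_min4_cong[of N] ring_cong_fps_const_nth[of 4]
    by (simp add: N_def P_def numeral_fps_const)
  also have "fps_nth (P * (geom_prod (min 2) N oo fps_X ^ 2)) n = fps_nth (P * pl_gf_sq 2) n"
    by (rule ring_cong_fps_X_power_nth[OF ring_cong_mult[OF ring_cong_refl ring_cong_sym],
          OF pl_gf_sq_cong_geom_prod[of n]]) (simp_all add: N_def)
  finally show "fps_nth (pl_gf 4) n mod 4 = fps_nth (P * pl_gf_sq 2) n mod 4" .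
qed

end
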